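(* Let $G$ be a finite group, $p$ a prime, $P\in\mathrm{Syl}_p(G)$ and $x\in P$. Then $|x^G|\leq |x^G\cap P|\,\nu_p(G)$, with equality if and only if $x$ lies in a unique Sylow $p$-subgroup of $G$. In particular, if $x\in P$ lies in a unique Sylow $p$-subgroup of $G$, then $|x^G|\geq \nu_p(G)|x^P|$.
   Context: $x^G$ (resp. $x^P$) denotes the conjugacy class of $x$ in $G$ (resp. in $P$), $\mathrm{Syl}_p(G)$ the set of Sylow $p$-subgroups of $G$, and $\nu_p(G)=|\mathrm{Syl}_p(G)|$. *)

theory Defs
  imports "HOL-Algebra.Algebra" "HOL-Computational_Algebra.Primes"
begin

definition Syl :: "nat \<Rightarrow> ('a, 'b) monoid_scheme \<Rightarrow> 'a set set" where
  "Syl p G = {P. subgroup P G \<and> card P = p ^ multiplicity p (order G)}"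

definition nu :: "nat \<Rightarrow> ('a, 'b) monoid_scheme \<Rightarrow> nat" where
  "nu p G = card (Syl p G)"

definition conj_class :: "('a, 'b) monoid_scheme \<Rightarrow> 'a \<Rightarrow> 'a set" where
  "conj_class G x = {g \<otimes>\<^bsub>G\<^esub> x \<otimes>\<^bsub>G\<^esub> inv\<^bsub>G\<^esub> g | g. g \<in> carrier G}"

end

theory Submission
  imports Defs
begin

(* Count the pairs (y, Q) with y a conjugate of x and Q a Sylow p-subgroup containing y.
   All Sylow p-subgroups are conjugate to P and conjugation permutes x^G, so each Q contains
   exactly |x^G \<inter> P| such y; conjugation also permutes the Sylow subgroups, so each conjugate
   of x lies in the same number n \<ge> 1 of them as x. Hence |x^G| n = |x^G \<inter> P| \<nu>_p(G), and
   x^P \<subseteq> x^G \<inter> P gives the last claim.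
   Sylow conjugacy: a p-subgroup H acts on the right cosets of a Sylow subgroup Q, whose number
   is prime to p, so H fixes some coset Qg, and then g H g\<inverse> \<subseteq> Q. *)

lemma (in group_action) p_group_action_fixed_point:
  assumes "finite E" and "Factorial_Ring.prime (p::nat)" and "order G = p ^ k"
    and "\<not> p dvd card E"
  shows "\<exists>x\<in>E. \<forall>g\<in>carrier G. \<phi> g x = x"
proof (rule ccontr)
  assume no_fixed: "\<not> ?thesis"
  have "p dvd card orb" if orb_in: "orb \<in> orbits G E \<phi>" for orb
  proof -
    obtain x where x: "x \<in> E" and orb: "orb = orbit G \<phi> x"
      using orb_in unfolding orbits_def by blast
    have "card orb dvd p ^ k"
      using orbit_stabilizer_theorem[OF x] orb assms(3) by (metis dvd_triv_left)
    moreover have "card orb \<noteq> 1"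
    proof
      assume "card orb = 1"
      then have "orb = {x}"
        using orbit_refl[OF x] orb by (metis card_1_singletonE singletonD)
      then show False
        using no_fixed x orb unfolding orbit_def by blast
    qed
    ultimately obtain i where "i \<noteq> 0" "card orb = p ^ i"
      using divides_primepow_nat[OF assms(2)] by (metis power_0)
    then show ?thesis by simp
  qed
  then have "p dvd (\<Sum>orb\<in>orbits G E \<phi>. card orb)"
    by (simp add: dvd_sum)
  also have "\<dots> = (\<Sum>orb\<in>orbits G E \<phi>. \<Sum>x\<in>orb. 1)"
    by (intro sum.cong refl) simp
  also have "\<dots> = card E"
    using disjoint_sum[OF assms(1), of "\<lambda>_. 1"] by (simp only: card_eq_sum)
  finally show False using assms(4) by simp
qed

context group
begin

lemma inv_mult_cancel_left [simp]: "x \<in> carrier G \<Longrightarrow> y \<in> carrier G \<Longrightarrow> inv x \<otimes> (x \<otimes> y) = y"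
  by (simp add: m_assoc [symmetric])

lemma mult_inv_cancel_left [simp]: "x \<in> carrier G \<Longrightarrow> y \<in> carrier G \<Longrightarrow> x \<otimes> (inv x \<otimes> y) = y"
  by (simp add: m_assoc [symmetric])

lemma inj_on_conjugation: "g \<in> carrier G \<Longrightarrow> inj_on (\<lambda>h. g \<otimes> h \<otimes> inv g) (carrier G)"
  by (rule inj_onI) simp

(* Multiplying by inv g rather than g turns right multiplication into a left action, which is
   what group_action (a homomorphism into the permutation group) demands. *)

lemma right_coset_action:
  assumes H: "subgroup H G"
  shows "group_action G (rcosets H) (\<lambda>g. \<lambda>C \<in> rcosets H. C #> inv g)"
proof -
  have coset_carrier: "C \<subseteq> carrier G" if "C \<in> rcosets H" for C
    using that subgroup.rcosets_carrier[OF H is_group] by blast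
  have coset_closed: "C #> g \<in> rcosets H" if "C \<in> rcosets H" "g \<in> carrier G" for C g
    using that H unfolding RCOSETS_def by (auto simp: coset_mult_assoc subgroup.subset)
  have bij: "(\<lambda>C \<in> rcosets H. C #> inv g) \<in> Bij (rcosets H)" if g: "g \<in> carrier G" for g
  proof -
    have "bij_betw (\<lambda>C. C #> inv g) (rcosets H) (rcosets H)"
      by (rule bij_betw_byWitness[where f' = "\<lambda>C. C #> g"])
        (use g coset_carrier coset_closed in \<open>auto simp: coset_mult_assoc\<close>)
    then show ?thesis
      unfolding Bij_def by simp
  qed
  have "(\<lambda>g. \<lambda>C \<in> rcosets H. C #> inv g) \<in> hom G (BijGroup (rcosets H))"
  proof (rule homI)
    fix g h assume g: "g \<in> carrier G" and h: "h \<in> carrier G"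
    have "(\<lambda>C \<in> rcosets H. C #> inv (g \<otimes> h))
        = compose (rcosets H) (\<lambda>C \<in> rcosets H. C #> inv g) (\<lambda>C \<in> rcosets H. C #> inv h)"
      unfolding compose_def
    proof (rule restrict_ext)
      fix C assume C: "C \<in> rcosets H"
      then have "C #> inv (g \<otimes> h) = (C #> inv h) #> inv g"
        using g h coset_carrier by (simp add: inv_mult_group coset_mult_assoc)
      then show "C #> inv (g \<otimes> h) = (\<lambda>C \<in> rcosets H. C #> inv g) ((\<lambda>C \<in> rcosets H. C #> inv h) C)"
        using C coset_closed h by simp
    qed
    then show "(\<lambda>C \<in> rcosets H. C #> inv (g \<otimes> h))
        = (\<lambda>C \<in> rcosets H. C #> inv g) \<otimes>\<^bsub>BijGroup (rcosets H)\<^esub> (\<lambda>C \<in> rcosets H. C #> inv h)"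
      using bij g h by (simp add: BijGroup_def)
  qed (use bij in \<open>simp add: BijGroup_def\<close>)
  then show ?thesis
    unfolding group_action_def group_hom_def group_hom_axioms_def
    using group_BijGroup is_group by blast
qed

lemma not_dvd_card_rcosets_Syl:
  assumes fin: "finite (carrier G)" and p: "Factorial_Ring.prime p" and Q: "Q \<in> Syl p G"
  shows "\<not> p dvd card (rcosets Q)"
proof
  let ?m = "multiplicity p (order G)"
  have "subgroup Q G" and "card Q = p ^ ?m"
    using Q by (simp_all add: Syl_def)
  then have index: "card (rcosets Q) * p ^ ?m = order G"
    using lagrange by metis
  assume "p dvd card (rcosets Q)"
  then obtain c where "card (rcosets Q) = p * c" ..
  then have "p ^ Suc ?m dvd order G"
    using index by (metis dvd_triv_left mult.assoc mult.commute power_Suc)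
  moreover have "order G \<noteq> 0"
    using fin order_gt_0_iff_finite by blast
  ultimately show False
    using p by (meson Suc_n_not_le_n not_prime_unit power_dvd_iff_le_multiplicity)
qed

lemma p_subgroup_conjugate_subset_Syl:
  assumes fin: "finite (carrier G)" and p: "Factorial_Ring.prime p"
    and H: "subgroup H G" "card H = p ^ k" and Q: "Q \<in> Syl p G"
  shows "\<exists>g \<in> carrier G. (\<lambda>h. g \<otimes> h \<otimes> inv g) ` H \<subseteq> Q"
proof -
  have Q_sub: "subgroup Q G"
    using Q by (simp add: Syl_def)
  interpret H_action: group_action "G\<lparr>carrier := H\<rparr>" "rcosets Q" "\<lambda>g. \<lambda>C \<in> rcosets Q. C #> inv g"
    using group_action.induced_action[OF right_coset_action[OF Q_sub] H(1)] .
  have "finite (rcosets Q)"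
    using lagrange[OF Q_sub] fin order_gt_0_iff_finite by (metis card_ge_0_finite mult_eq_0_iff not_gr0)
  then have "\<exists>C \<in> rcosets Q. \<forall>h \<in> H. (\<lambda>C \<in> rcosets Q. C #> inv h) C = C"
    using H_action.p_group_action_fixed_point[OF _ p _ not_dvd_card_rcosets_Syl[OF fin p Q]] H(2)
    by (simp add: order_def)
  then obtain C where C: "C \<in> rcosets Q" and fixed: "\<And>h. h \<in> H \<Longrightarrow> C #> inv h = C"
    by auto
  obtain g where g: "g \<in> carrier G" and C_eq: "C = Q #> g"
    using C unfolding RCOSETS_def by blast
  have "g \<otimes> h \<otimes> inv g \<in> Q" if h: "h \<in> H" for h
  proof -
    have h_carrier: "h \<in> carrier G" and "inv h \<in> H"
      using h H(1) subgroup.mem_carrier subgroup.m_inv_closed by fastforce+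
    then have "Q #> g #> h = Q #> g"
      using fixed C_eq by force
    then have "Q #> g = Q #> (g \<otimes> h)"
      using g h_carrier Q_sub by (simp add: coset_mult_assoc subgroup.subset)
    then have "g \<otimes> h \<in> Q #> g"
      using repr_independenceD[OF Q_sub] g h_carrier by blast
    then show ?thesis
      using subgroup.rcos_module_imp[OF Q_sub is_group g] by blast
  qed
  then show ?thesis
    using g by blast
qed

lemma Syl_conjugate:
  assumes fin: "finite (carrier G)" and p: "Factorial_Ring.prime p"
    and P: "P \<in> Syl p G" and Q: "Q \<in> Syl p G"
  shows "\<exists>g \<in> carrier G. Q = (\<lambda>h. g \<otimes> h \<otimes> inv g) ` P"
proof -
  have P_sub: "subgroup P G" and card_P: "card P = p ^ multiplicity p (order G)"
    and Q_sub: "subgroup Q G" and card_Q: "card Q = p ^ multiplicity p (order G)"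
    using P Q by (simp_all add: Syl_def)
  obtain g where g: "g \<in> carrier G" and sub: "(\<lambda>h. g \<otimes> h \<otimes> inv g) ` P \<subseteq> Q"
    using p_subgroup_conjugate_subset_Syl[OF fin p P_sub card_P Q] by blast
  have "card ((\<lambda>h. g \<otimes> h \<otimes> inv g) ` P) = card Q"
    using inj_on_conjugation[OF g] subgroup.subset[OF P_sub] card_P card_Q
    by (simp add: card_image inj_on_subset)
  moreover have "finite Q"
    using fin subgroup.subset[OF Q_sub] finite_subset by blast
  ultimately have "(\<lambda>h. g \<otimes> h \<otimes> inv g) ` P = Q"
    using sub card_subset_eq by blast
  then show ?thesis
    using g by blast
qed

lemma conj_class_subset_carrier: "x \<in> carrier G \<Longrightarrow> conj_class G x \<subseteq> carrier G"
  unfolding conj_class_def by auto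

lemma conj_class_self: "x \<in> carrier G \<Longrightarrow> x \<in> conj_class G x"
  unfolding conj_class_def by (rule CollectI, rule exI[of _ \<one>]) simp

lemma conjugation_image_conj_class:
  assumes x: "x \<in> carrier G" and g: "g \<in> carrier G"
  shows "(\<lambda>y. g \<otimes> y \<otimes> inv g) ` conj_class G x = conj_class G x"
proof
  show "(\<lambda>y. g \<otimes> y \<otimes> inv g) ` conj_class G x \<subseteq> conj_class G x"
  proof
    fix z assume "z \<in> (\<lambda>y. g \<otimes> y \<otimes> inv g) ` conj_class G x"
    then obtain k where k: "k \<in> carrier G" and z: "z = g \<otimes> (k \<otimes> x \<otimes> inv k) \<otimes> inv g"
      unfolding conj_class_def by blast
    then have "z = (g \<otimes> k) \<otimes> x \<otimes> inv (g \<otimes> k)"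
      using x g by (simp add: m_assoc inv_mult_group)
    then show "z \<in> conj_class G x"
      unfolding conj_class_def using k g by blast
  qed
  show "conj_class G x \<subseteq> (\<lambda>y. g \<otimes> y \<otimes> inv g) ` conj_class G x"
  proof
    fix z assume "z \<in> conj_class G x"
    then obtain k where k: "k \<in> carrier G" and z: "z = k \<otimes> x \<otimes> inv k"
      unfolding conj_class_def by blast
    then have "z = g \<otimes> ((inv g \<otimes> k) \<otimes> x \<otimes> inv (inv g \<otimes> k)) \<otimes> inv g"
      using x g by (simp add: m_assoc inv_mult_group)
    moreover have "(inv g \<otimes> k) \<otimes> x \<otimes> inv (inv g \<otimes> k) \<in> conj_class G x"
      unfolding conj_class_def using k g by blast
    ultimately show "z \<in> (\<lambda>y. g \<otimes> y \<otimes> inv g) ` conj_class G x"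
      by blast
  qed
qed

lemma conjugation_image_Syl:
  assumes Q: "Q \<in> Syl p G" and g: "g \<in> carrier G"
  shows "(\<lambda>y. g \<otimes> y \<otimes> inv g) ` Q \<in> Syl p G"
proof -
  have Q_sub: "subgroup Q G"
    using Q by (simp add: Syl_def)
  have "group_hom G G (\<lambda>y. g \<otimes> y \<otimes> inv g)"
    using g by (intro group_hom.intro group_hom_axioms.intro is_group homI) (simp_all add: m_assoc)
  then have "subgroup ((\<lambda>y. g \<otimes> y \<otimes> inv g) ` Q) G"
    using group_hom.subgroup_img_is_subgroup Q_sub by blast
  moreover have "card ((\<lambda>y. g \<otimes> y \<otimes> inv g) ` Q) = card Q"
    using inj_on_conjugation[OF g] subgroup.subset[OF Q_sub] by (simp add: card_image inj_on_subset)
  ultimately show ?thesis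
    using Q by (simp add: Syl_def)
qed

lemma finite_Syl: "finite (carrier G) \<Longrightarrow> finite (Syl p G)"
  unfolding Syl_def by (rule finite_subset[of _ "Pow (carrier G)"]) (auto dest: subgroup.subset)

lemma card_conj_class_Int_Syl:
  assumes fin: "finite (carrier G)" and p: "Factorial_Ring.prime p"
    and P: "P \<in> Syl p G" and Q: "Q \<in> Syl p G" and x: "x \<in> carrier G"
  shows "card (conj_class G x \<inter> Q) = card (conj_class G x \<inter> P)"
proof -
  obtain g where g: "g \<in> carrier G" and Q_eq: "Q = (\<lambda>y. g \<otimes> y \<otimes> inv g) ` P"
    using Syl_conjugate[OF fin p P Q] by blast
  have P_carrier: "P \<subseteq> carrier G"
    using P subgroup.subset by (auto simp: Syl_def)
  have "conj_class G x \<inter> Q = (\<lambda>y. g \<otimes> y \<otimes> inv g) ` (conj_class G x \<inter> P)"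
    using Q_eq conjugation_image_conj_class[OF x g]
      inj_on_image_Int[OF inj_on_conjugation[OF g] conj_class_subset_carrier[OF x] P_carrier]
    by simp
  moreover have "inj_on (\<lambda>y. g \<otimes> y \<otimes> inv g) (conj_class G x \<inter> P)"
    by (rule inj_on_subset[OF inj_on_conjugation[OF g]]) (use P_carrier in blast)
  ultimately show ?thesis
    by (simp add: card_image)
qed

lemma card_Syl_containing_le_conjugate:
  assumes fin: "finite (carrier G)" and g: "g \<in> carrier G"
  shows "card {Q \<in> Syl p G. x \<in> Q} \<le> card {Q \<in> Syl p G. g \<otimes> x \<otimes> inv g \<in> Q}"
proof (rule card_inj_on_le)
  show "inj_on ((`) (\<lambda>y. g \<otimes> y \<otimes> inv g)) {Q \<in> Syl p G. x \<in> Q}"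
    using inj_on_conjugation[OF g]
    by (rule inj_on_image[OF inj_on_subset]) (auto simp: Syl_def dest: subgroup.subset)
  show "(`) (\<lambda>y. g \<otimes> y \<otimes> inv g) ` {Q \<in> Syl p G. x \<in> Q} \<subseteq> {Q \<in> Syl p G. g \<otimes> x \<otimes> inv g \<in> Q}"
    using conjugation_image_Syl g by blast
  show "finite {Q \<in> Syl p G. g \<otimes> x \<otimes> inv g \<in> Q}"
    using finite_Syl[OF fin] by simp
qed

lemma card_Syl_containing_conj_class:
  assumes fin: "finite (carrier G)" and x: "x \<in> carrier G" and y: "y \<in> conj_class G x"
  shows "card {Q \<in> Syl p G. y \<in> Q} = card {Q \<in> Syl p G. x \<in> Q}"
proof -
  obtain g where g: "g \<in> carrier G" and y_eq: "y = g \<otimes> x \<otimes> inv g"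
    using y unfolding conj_class_def by blast
  have "x = inv g \<otimes> y \<otimes> inv (inv g)"
    using x g y_eq by (simp add: m_assoc)
  then show ?thesis
    using card_Syl_containing_le_conjugate[OF fin g, of p x]
      card_Syl_containing_le_conjugate[OF fin inv_closed[OF g], of p y] y_eq
    by simp
qed

lemma card_conj_class_mult_card_Syl_containing:
  assumes fin: "finite (carrier G)" and p: "Factorial_Ring.prime p"
    and P: "P \<in> Syl p G" and x: "x \<in> carrier G"
  shows "card (conj_class G x) * card {Q \<in> Syl p G. x \<in> Q}
       = card (conj_class G x \<inter> P) * nu p G"
proof -
  have finite_class: "finite (conj_class G x)"
    using fin conj_class_subset_carrier[OF x] finite_subset by blast
  have "card (conj_class G x) * card {Q \<in> Syl p G. x \<in> Q}
      = (\<Sum>y \<in> conj_class G x. card {Q \<in> Syl p G. y \<in> Q})"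
    using card_Syl_containing_conj_class[OF fin x] by simp
  also have "\<dots> = (\<Sum>Q \<in> Syl p G. card {y \<in> conj_class G x. y \<in> Q})"
    using sum.swap_restrict[OF finite_class finite_Syl[OF fin],
        where g = "\<lambda>_ _. 1::nat" and R = "\<lambda>y Q. y \<in> Q"]
    by simp
  also have "\<dots> = (\<Sum>Q \<in> Syl p G. card (conj_class G x \<inter> P))"
    using card_conj_class_Int_Syl[OF fin p P _ x] by (intro sum.cong) (auto simp: Int_def)
  finally show ?thesis
    by (simp add: nu_def)
qed

lemma conj_class_subgroup_subset:
  assumes "subgroup H G" and "x \<in> H"
  shows "conj_class (G\<lparr>carrier := H\<rparr>) x \<subseteq> conj_class G x \<inter> H"
  using assms unfolding conj_class_def
  by (auto simp: subgroup.m_closed subgroup.m_inv_closed dest: subgroup.mem_carrier)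

end

theorem lemma2p6:
  fixes G (structure) and p :: nat and P :: "'a set" and x :: 'a
  assumes "group G" and "finite (carrier G)" and "Factorial_Ring.prime p"
    and "P \<in> Syl p G" and "x \<in> P"
  shows "card (conj_class G x) \<le> card (conj_class G x \<inter> P) * nu p G
       \<and> (card (conj_class G x) = card (conj_class G x \<inter> P) * nu p G
            \<longleftrightarrow> (\<exists>!Q. Q \<in> Syl p G \<and> x \<in> Q))
       \<and> ((\<exists>!Q. Q \<in> Syl p G \<and> x \<in> Q) \<longrightarrow>
            card (conj_class G x) \<ge> nu p G * card (conj_class (G\<lparr>carrier := P\<rparr>) x))"
proof -
  interpret group G by fact
  have P_sub: "subgroup P G"
    using assms(4) by (simp add: Syl_def)
  have x: "x \<in> carrier G"
    using assms(5) subgroup.subset[OF P_sub] by blast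
  define n where "n = card {Q \<in> Syl p G. x \<in> Q}"
  let ?C = "card (conj_class G x)" and ?I = "card (conj_class G x \<inter> P)"
  have count: "?C * n = ?I * nu p G"
    unfolding n_def using card_conj_class_mult_card_Syl_containing[OF assms(2-4) x] .
  have "n \<noteq> 0"
    using assms(4,5) finite_Syl[OF assms(2)] by (auto simp: n_def)
  then have "?C \<le> ?C * n"
    by simp
  then have bound: "?C \<le> ?I * nu p G"
    using count by simp
  have "?C \<noteq> 0"
    using conj_class_self[OF x] conj_class_subset_carrier[OF x] assms(2)
    by (auto simp: finite_subset)
  then have equality: "?C = ?I * nu p G \<longleftrightarrow> n = 1"
    by (auto simp flip: count)
  have unique: "n = 1 \<longleftrightarrow> (\<exists>!Q. Q \<in> Syl p G \<and> x \<in> Q)"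
    unfolding n_def is_singleton_altdef [symmetric] is_singleton_iff_ex1 by simp
  have "card (conj_class (G\<lparr>carrier := P\<rparr>) x) \<le> ?I"
    using conj_class_subgroup_subset[OF P_sub assms(5)] conj_class_subset_carrier[OF x] assms(2)
    by (meson card_mono finite_Int finite_subset)
  then have "nu p G * card (conj_class (G\<lparr>carrier := P\<rparr>) x) \<le> ?I * nu p G"
    by (simp add: mult.commute)
  then show ?thesis
    using bound equality unique by auto
qed

end
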